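(* The set of periodic points of $R$ is dense in $[0,1]$, and for every integer $n\ge1$ the map $R$ has uncountably many periodic points of minimal period $n$.
   Context: Define $\rho$ on binary words: for $b=b_1b_2\dots$, $\rho(b)$ is obtained by deleting every digit $b_n=0$ and replacing every $b_n=1$ by $0$ if $n$ is odd and by $1$ if $n$ is even. For $x\in(0,1]$ let $\beta(x)$ be the unique binary expansion of $x$ with infinitely many $1$'s. Define $R:[0,1]\to[0,1]$ by $R(0)=2/3$ and, for $x\in(0,1]$, $R(x)=\sum_{n\ge1}c_n2^{-n}$ where $c=\rho(\beta(x))$. *)

theory Defs
  imports "HOL-Analysis.Analysis" "HOL-Library.Infinite_Set"
begin

text \<open>Binary words are sequences b :: nat => bool, with b k standing for the digit
  b_{k+1} of the paper (0-based indexing); True means digit 1.\<close>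

text \<open>rho on a binary word with infinitely many ones: the m-th surviving digit (0-based)
  comes from the m-th one of b, at 0-based index k = enumerate {k. b k} m, i.e. paper position
  k+1; it becomes 0 if k+1 is odd and 1 if k+1 is even, i.e. 1 iff k is odd.\<close>
definition rho :: "(nat \<Rightarrow> bool) \<Rightarrow> (nat \<Rightarrow> bool)" where
  "rho b = (\<lambda>m. odd (enumerate {k. b k} m))"

definition bval :: "(nat \<Rightarrow> bool) \<Rightarrow> real" where
  "bval b = (\<Sum>k. (if b k then 1 else 0) / 2 ^ (Suc k))"

definition beta :: "real \<Rightarrow> (nat \<Rightarrow> bool)" where
  "beta x = (THE b. infinite {k. b k} \<and> (\<lambda>k. (if b k then 1 else 0) / 2 ^ (Suc k)) sums x)"

definition R :: "real \<Rightarrow> real" where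
  "R x = (if x = 0 then 2/3 else bval (rho (beta x)))"

definition periodic_point :: "(real \<Rightarrow> real) \<Rightarrow> real \<Rightarrow> bool" where
  "periodic_point f x \<longleftrightarrow> (\<exists>n>0. (f ^^ n) x = x)"

definition minimal_period :: "(real \<Rightarrow> real) \<Rightarrow> nat \<Rightarrow> real \<Rightarrow> bool" where
  "minimal_period f n x \<longleftrightarrow> n > 0 \<and> (f ^^ n) x = x \<and> (\<forall>m. 0 < m \<and> m < n \<longrightarrow> (f ^^ m) x \<noteq> x)"

end

theory Submission
  imports Defs
begin

text \<open>On words with infinitely many ones, bval is injective and R acts as rho, so a point of
  period n is the value of the first word of a cycle w_0, ..., w_(n-1) with
  rho w_j = w_((j+1) mod n). Such a cycle is built by choosing the positions of the ones of all
  n words simultaneously and increasingly: the parity of the m-th one of w_j is dictated by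
  whether m is a one of the next word, which is already decided because free positions exceed
  their index. Prescribing the prefixes p, rho p, rho (rho p), ..., which end in the empty word,
  gives a periodic point within 2^-L of any x whose first L binary digits form p. Adding free
  even offsets to the positions gives a continuum of cycles, and different offsets at the first
  one of each word make their period minimal.\<close>

section \<open>Enumerations and binary words\<close>

lemma enumerate_range_strict_mono:
  fixes f :: "nat \<Rightarrow> nat"
  assumes f: "strict_mono f"
  shows "enumerate (range f) = f"
proof
  fix m
  have inf: "infinite (range f)"
    using f strict_mono_imp_inj_on range_inj_infinite by blast
  have le: "f i \<le> f j \<longleftrightarrow> i \<le> j" and less: "f i < f j \<longleftrightarrow> i < j" for i j
    using f by (simp_all add: strict_mono_less_eq strict_mono_less)
  show "enumerate (range f) m = f m"
  proof (induction m)
    case 0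
    show ?case
      unfolding enumerate_0 by (rule Least_equality) (auto simp: le)
  next
    case (Suc m)
    show ?case
      unfolding enumerate_Suc''[OF inf] Suc
      by (rule Least_equality) (auto simp: le less Suc_le_eq)
  qed
qed

lemma strict_mono_range_eq:
  fixes f g :: "nat \<Rightarrow> nat"
  assumes "strict_mono f" "strict_mono g" "range f = range g"
  shows "f = g"
  using assms enumerate_range_strict_mono by metis

abbreviation bit_term :: "(nat \<Rightarrow> bool) \<Rightarrow> nat \<Rightarrow> real" where
  "bit_term b i \<equiv> (if b i then 1 else 0) / 2 ^ Suc i"

lemma summable_bit_term_shift: "summable (\<lambda>i. bit_term b (i + m))"
proof -
  have "summable (\<lambda>i. (1/2::real) ^ Suc i)"
    using power_half_series sums_summable by blast
  then have "summable (bit_term b)"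
    by (rule summable_comparison_test'[where N = 0]) (simp add: power_one_over)
  then show ?thesis
    by (subst summable_iff_shift)
qed

lemma bit_tail_bounds: "0 \<le> (\<Sum>i. bit_term b (i + m)) \<and> (\<Sum>i. bit_term b (i + m)) \<le> 1 / 2 ^ m"
proof
  show "0 \<le> (\<Sum>i. bit_term b (i + m))"
    by (intro suminf_nonneg summable_bit_term_shift) simp
  have s: "(\<lambda>i. 1 / 2 ^ m * (1/2::real) ^ Suc i) sums (1 / 2 ^ m * 1)"
    by (rule sums_mult[OF power_half_series])
  have "(\<Sum>i. bit_term b (i + m)) \<le> (\<Sum>i. 1 / 2 ^ m * (1/2::real) ^ Suc i)"
    by (intro suminf_le summable_bit_term_shift sums_summable[OF s])
       (simp add: power_add power_one_over field_simps)
  also have "\<dots> = 1 / 2 ^ m"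
    using sums_unique[OF s] by linarith
  finally show "(\<Sum>i. bit_term b (i + m)) \<le> 1 / 2 ^ m" .
qed

lemma bit_tail_pos: "b (k + m) \<Longrightarrow> 0 < (\<Sum>i. bit_term b (i + m))"
  by (rule suminf_pos2[OF summable_bit_term_shift, of _ _ k]) auto

lemma bval_split: "bval b = (\<Sum>i. bit_term b (i + m)) + (\<Sum>i<m. bit_term b i)"
  using suminf_split_initial_segment[OF summable_bit_term_shift[of b 0]]
  by (simp add: bval_def)

lemma bval_bounds: "0 \<le> bval b \<and> bval b \<le> 1"
  using bval_split[of b 0] bit_tail_bounds[of b 0] by simp

lemma bval_less:
  assumes "infinite {i. b i}" and "\<forall>i<k. b i = c i" and "b k" and "\<not> c k"
  shows "bval c < bval b"
proof -
  obtain k' where "k < k'" "b k'"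
    using assms(1) unfolding infinite_nat_iff_unbounded by blast
  then have d: "b ((k' - Suc k) + Suc k)"
    by simp
  have "bval c \<le> 1 / 2 ^ Suc k + (\<Sum>i<Suc k. bit_term c i)"
    using bval_split[of c "Suc k"] bit_tail_bounds[of c "Suc k"] by simp
  also have "\<dots> = (\<Sum>i<Suc k. bit_term b i)"
    using assms(2-4) by simp
  also have "\<dots> < (\<Sum>i. bit_term b (i + Suc k)) + (\<Sum>i<Suc k. bit_term b i)"
    using bit_tail_pos[of b "k' - Suc k" "Suc k"] d by simp
  also have "\<dots> = bval b"
    using bval_split[of b "Suc k"] by simp
  finally show ?thesis .
qed

lemma inj_on_bval: "inj_on bval {b. infinite {i. b i}}"
proof (rule inj_onI, rule ccontr)
  fix b c assume b: "b \<in> {b. infinite {i. b i}}" and c: "c \<in> {b. infinite {i. b i}}"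
    and eq: "bval b = bval c" and "b \<noteq> c"
  then have ex: "\<exists>i. b i \<noteq> c i" by auto
  define k where "k = (LEAST i. b i \<noteq> c i)"
  have "b k \<noteq> c k"
    unfolding k_def by (rule LeastI_ex[OF ex])
  moreover have "\<forall>i<k. b i = c i"
    unfolding k_def using not_less_Least by blast
  ultimately show False
    using bval_less[of b k c] bval_less[of c k b] b c eq by auto
qed

lemma beta_bval:
  assumes "infinite {i. b i}"
  shows "beta (bval b) = b"
  unfolding beta_def
proof (rule the_equality)
  show "infinite {k. b k} \<and> bit_term b sums bval b"
    using assms summable_bit_term_shift[of b 0] by (simp add: bval_def summable_sums)
next
  fix c assume "infinite {k. c k} \<and> bit_term c sums bval b"
  then show "c = b"
    using inj_on_bval assms sums_unique unfolding bval_def inj_on_def by auto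
qed

lemma R_bval:
  assumes "infinite {i. b i}"
  shows "R (bval b) = bval (rho b)"
proof -
  obtain k where "b k"
    using assms not_finite_existsD by auto
  then have "0 < bval b"
    using bit_tail_pos[of b k 0] bval_split[of b 0] by simp
  then show ?thesis
    by (simp add: R_def beta_bval[OF assms])
qed

section \<open>Dyadic approximation and finite words\<close>

fun greedy_sum :: "real \<Rightarrow> nat \<Rightarrow> real" where
  "greedy_sum x 0 = 0"
| "greedy_sum x (Suc i) =
     greedy_sum x i + (if greedy_sum x i + 1 / 2 ^ Suc i \<le> x then 1 / 2 ^ Suc i else 0)"

definition greedy_digit :: "real \<Rightarrow> nat \<Rightarrow> bool" where
  "greedy_digit x i \<longleftrightarrow> greedy_sum x i + 1 / 2 ^ Suc i \<le> x"

lemma greedy_sum_bounds: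
  assumes "0 \<le> x" "x \<le> 1"
  shows "greedy_sum x L \<le> x \<and> x \<le> greedy_sum x L + 1 / 2 ^ L"
proof (induction L)
  case 0
  then show ?case using assms by simp
next
  case (Suc L)
  have "(1::real) / 2 ^ L = 1 / 2 ^ Suc L + 1 / 2 ^ Suc L" by simp
  then show ?case using Suc by (simp only: greedy_sum.simps) (split if_split, linarith)
qed

lemma greedy_sum_eq: "greedy_sum x L = (\<Sum>i<L. bit_term (greedy_digit x) i)"
  by (induction L) (simp_all add: greedy_digit_def)

lemma bval_greedy_approx:
  assumes "0 \<le> x" "x \<le> 1" and "\<forall>i<L. b i = greedy_digit x i"
  shows "\<bar>bval b - x\<bar> \<le> 1 / 2 ^ L"
proof -
  have "bval b = (\<Sum>i. bit_term b (i + L)) + greedy_sum x L"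
    using bval_split[of b L] assms(3) by (simp add: greedy_sum_eq)
  then show ?thesis
    using greedy_sum_bounds[OF assms(1,2), of L] bit_tail_bounds[of b L] by auto
qed

definition one_positions :: "bool list \<Rightarrow> nat list" where
  "one_positions q = filter (\<lambda>i. q ! i) [0..<length q]"

definition rho_list :: "bool list \<Rightarrow> bool list" where
  "rho_list q = map odd (one_positions q)"

lemma set_one_positions: "i \<in> set (one_positions q) \<longleftrightarrow> i < length q \<and> q ! i"
  by (auto simp: one_positions_def)

lemma one_positions_nth_less:
  "a < b \<Longrightarrow> b < length (one_positions q) \<Longrightarrow> one_positions q ! a < one_positions q ! b"
  unfolding one_positions_def
  by (intro sorted_wrt_nth_less sorted_wrt_filter) (simp_all add: sorted_wrt_iff_nth_less)

lemma length_one_positions_le: "length (one_positions q) \<le> length q"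
  unfolding one_positions_def using length_filter_le[of _ "[0..<length q]"] by simp

lemma length_one_positions_less:
  "i < length q \<Longrightarrow> \<not> q ! i \<Longrightarrow> length (one_positions q) < length q"
  unfolding one_positions_def by (metis atLeastLessThan_iff diff_zero le0 length_filter_less length_upt set_upt)

lemma length_rho_list: "length (rho_list q) = length (one_positions q)"
  by (simp add: rho_list_def)

lemma length_rho_list_rho_list_less:
  assumes "q \<noteq> []"
  shows "length (rho_list (rho_list q)) < length q"
proof (cases "\<forall>i<length q. q ! i")
  case True
  then have "one_positions q = [0..<length q]"
    by (simp add: one_positions_def filter_id_conv)
  then have "\<not> rho_list q ! 0" and "length (rho_list q) = length q"
    using assms by (simp_all add: rho_list_def)
  then show ?thesis
    using length_one_positions_less[of 0 "rho_list q"] assms by (simp add: length_rho_list)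
next
  case False
  then show ?thesis
    using length_one_positions_less length_one_positions_le[of "rho_list q"] by (fastforce simp: length_rho_list)
qed

lemma rho_list_funpow_Nil: "(rho_list ^^ (2 * length q)) q = []"
proof (induction "length q" arbitrary: q rule: less_induct)
  case less
  have Nil: "(rho_list ^^ k) [] = []" for k
    by (induction k) (simp_all add: rho_list_def one_positions_def)
  show ?case
  proof (cases "q = []")
    case False
    let ?q = "rho_list (rho_list q)"
    have "length ?q < length q"
      using length_rho_list_rho_list_less[OF False] .
    then obtain k where k: "2 * length q = k + 2 * length ?q + 2"
      by (metis add.commute less_imp_Suc_add mult_Suc_right add_2_eq_Suc' add_mult_distrib2)
    have "(rho_list ^^ (2 * length q)) q = (rho_list ^^ k) ((rho_list ^^ (2 * length ?q)) ?q)"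
      unfolding k by (simp add: funpow_add funpow_Suc_right numeral_2_eq_2 del: funpow.simps)
    then show ?thesis
      using less \<open>length ?q < length q\<close> Nil by simp
  qed (simp add: Nil)
qed

section \<open>Cycles of words under rho\<close>

text \<open>cycle_ones n Q e j enumerates the ones of the j-th word of the cycle with prefixes Q.
  Beyond the ones of Q j, the m-th one is the least position after the previous one (or after
  Q j) whose parity records whether m is a one of the next word, plus the even offset 2 e j m.\<close>
function cycle_ones :: "nat \<Rightarrow> (nat \<Rightarrow> bool list) \<Rightarrow> (nat \<Rightarrow> nat \<Rightarrow> nat) \<Rightarrow> nat \<Rightarrow> nat \<Rightarrow> nat" where
  "cycle_ones n Q e j m =
    (if m < length (one_positions (Q j)) then one_positions (Q j) ! m
     else
       (let base = (if m = length (one_positions (Q j)) then Suc (length (Q j))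
                    else Suc (cycle_ones n Q e j (m - 1)));
            one_next = (m \<in> set (one_positions (Q (Suc j mod n)))
                        \<or> (\<exists>i\<in>{..<m}. cycle_ones n Q e (Suc j mod n) i = m))
        in base + (if odd base = one_next then 0 else 1) + 2 * e j m))"
  by pat_completeness auto
termination by (relation "Wellfounded.measure (\<lambda>(n, Q, e, j, m). m)") auto

declare cycle_ones.simps [simp del]

definition cycle_base :: "nat \<Rightarrow> (nat \<Rightarrow> bool list) \<Rightarrow> (nat \<Rightarrow> nat \<Rightarrow> nat) \<Rightarrow> nat \<Rightarrow> nat \<Rightarrow> nat" where
  "cycle_base n Q e j m =
     (if m = length (one_positions (Q j)) then Suc (length (Q j))
      else Suc (cycle_ones n Q e j (m - 1)))"

definition cycle_one_next :: "nat \<Rightarrow> (nat \<Rightarrow> bool list) \<Rightarrow> (nat \<Rightarrow> nat \<Rightarrow> nat) \<Rightarrow> nat \<Rightarrow> nat \<Rightarrow> bool" where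
  "cycle_one_next n Q e j m \<longleftrightarrow>
     m \<in> set (one_positions (Q (Suc j mod n))) \<or> (\<exists>i\<in>{..<m}. cycle_ones n Q e (Suc j mod n) i = m)"

definition cycle_word :: "nat \<Rightarrow> (nat \<Rightarrow> bool list) \<Rightarrow> (nat \<Rightarrow> nat \<Rightarrow> nat) \<Rightarrow> nat \<Rightarrow> nat \<Rightarrow> bool" where
  "cycle_word n Q e j = (\<lambda>i. i \<in> range (cycle_ones n Q e j))"

context
  fixes n :: nat and Q :: "nat \<Rightarrow> bool list" and e :: "nat \<Rightarrow> nat \<Rightarrow> nat"
begin

lemma cycle_ones_prefix:
  "m < length (one_positions (Q j)) \<Longrightarrow> cycle_ones n Q e j m = one_positions (Q j) ! m"
  by (subst cycle_ones.simps) simp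

lemma cycle_ones_free:
  "length (one_positions (Q j)) \<le> m \<Longrightarrow> cycle_ones n Q e j m =
     cycle_base n Q e j m + (if odd (cycle_base n Q e j m) = cycle_one_next n Q e j m then 0 else 1)
       + 2 * e j m"
  by (subst cycle_ones.simps) (simp add: Let_def cycle_base_def cycle_one_next_def)

lemma strict_mono_cycle_ones: "strict_mono (cycle_ones n Q e j)"
  unfolding strict_mono_Suc_iff
proof
  fix m
  show "cycle_ones n Q e j m < cycle_ones n Q e j (Suc m)"
  proof (cases "Suc m < length (one_positions (Q j))")
    case True
    then show ?thesis by (simp add: cycle_ones_prefix one_positions_nth_less)
  next
    case False
    have "cycle_ones n Q e j m < cycle_base n Q e j (Suc m)"
    proof (cases "Suc m = length (one_positions (Q j))")
      case True
      then have "cycle_ones n Q e j m \<in> set (one_positions (Q j))"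
        by (simp add: cycle_ones_prefix)
      then show ?thesis
        using True by (simp add: cycle_base_def set_one_positions)
    qed (simp add: cycle_base_def)
    then show ?thesis
      using False by (subst (2) cycle_ones_free) auto
  qed
qed

lemma cycle_ones_free_gt:
  assumes "length (one_positions (Q j)) \<le> m"
  shows "m < cycle_ones n Q e j m \<and> length (Q j) < cycle_ones n Q e j m"
proof -
  have "Suc (length (Q j)) + (m - length (one_positions (Q j))) \<le> cycle_ones n Q e j m"
    using assms
  proof (induction m)
    case (Suc m)
    then show ?case
      by (subst cycle_ones_free) (auto simp: cycle_base_def)
  qed (subst cycle_ones_free, auto simp: cycle_base_def)
  then show ?thesis
    using length_one_positions_le[of "Q j"] by auto
qed

lemma range_cycle_ones_iff:
  "x \<in> range (cycle_ones n Q e j) \<longleftrightarrow>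
     x \<in> set (one_positions (Q j)) \<or> (\<exists>i<x. cycle_ones n Q e j i = x) \<and> length (Q j) < x"
proof
  assume "x \<in> range (cycle_ones n Q e j)"
  then obtain i where i: "cycle_ones n Q e j i = x" by auto
  show "x \<in> set (one_positions (Q j)) \<or> (\<exists>i<x. cycle_ones n Q e j i = x) \<and> length (Q j) < x"
  proof (cases "i < length (one_positions (Q j))")
    case True
    then show ?thesis
      using i nth_mem by (metis cycle_ones_prefix)
  next
    case False
    then show ?thesis
      using i cycle_ones_free_gt[of j i] by auto
  qed
next
  assume "x \<in> set (one_positions (Q j)) \<or> (\<exists>i<x. cycle_ones n Q e j i = x) \<and> length (Q j) < x"
  then show "x \<in> range (cycle_ones n Q e j)"
    by (metis in_set_conv_nth cycle_ones_prefix rangeI)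
qed

lemma cycle_word_prefix: "i < length (Q j) \<Longrightarrow> cycle_word n Q e j i = Q j ! i"
  by (simp add: cycle_word_def range_cycle_ones_iff set_one_positions)

lemma infinite_cycle_word: "infinite {i. cycle_word n Q e j i}"
  using range_inj_infinite[OF strict_mono_imp_inj_on[OF strict_mono_cycle_ones]]
  by (simp add: cycle_word_def)

lemma rho_cycle_word:
  assumes "one_positions (Q j) \<noteq> [] \<Longrightarrow> Q (Suc j mod n) = rho_list (Q j)"
  shows "rho (cycle_word n Q e j) = cycle_word n Q e (Suc j mod n)"
proof -
  let ?j' = "Suc j mod n"
  have "odd (cycle_ones n Q e j m) \<longleftrightarrow> m \<in> range (cycle_ones n Q e ?j')" for m
  proof (cases "m < length (one_positions (Q j))")
    case True
    have "Q ?j' = rho_list (Q j)"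
      using True by (intro assms) auto
    then show ?thesis
      using True by (simp add: range_cycle_ones_iff cycle_ones_prefix set_one_positions length_rho_list)
                    (simp add: rho_list_def)
  next
    case False
    have "cycle_one_next n Q e j m \<longleftrightarrow> m \<in> range (cycle_ones n Q e ?j')"
      using range_cycle_ones_iff[of m ?j'] unfolding cycle_one_next_def by auto
    then show ?thesis
      using False by (subst cycle_ones_free) auto
  qed
  then show ?thesis
    unfolding rho_def cycle_word_def
    by (simp add: enumerate_range_strict_mono strict_mono_cycle_ones)
qed

end

lemma cycle_ones_free_shift:
  assumes "\<forall>j. \<forall>i<m. cycle_ones n Q e j i = cycle_ones n Q e' j i"
    and "length (one_positions (Q j)) \<le> m"
  shows "cycle_ones n Q e j m + 2 * e' j m = cycle_ones n Q e' j m + 2 * e j m"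
proof -
  have "cycle_base n Q e j m = cycle_base n Q e' j m"
    using assms by (cases m) (auto simp: cycle_base_def)
  moreover have "cycle_one_next n Q e j m = cycle_one_next n Q e' j m"
    using assms(1) by (simp add: cycle_one_next_def)
  ultimately show ?thesis
    using assms(2)
    by (simp add: cycle_ones_free[where e = e and m = m] cycle_ones_free[where e = e' and m = m])
qed

lemma cycle_ones_agree:
  assumes "\<forall>j. \<forall>i<m. e j i = e' j i"
  shows "\<forall>j. \<forall>i<m. cycle_ones n Q e j i = cycle_ones n Q e' j i"
  using assms
proof (induction m)
  case (Suc m)
  then have IH: "\<forall>j. \<forall>i<m. cycle_ones n Q e j i = cycle_ones n Q e' j i"
    by simp
  have "cycle_ones n Q e j m = cycle_ones n Q e' j m" for j
    using cycle_ones_free_shift[OF IH, of j] Suc.prems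
    by (cases "m < length (one_positions (Q j))") (simp_all add: cycle_ones_prefix)
  then show ?case
    using IH by (auto simp: less_Suc_eq)
qed simp

lemma cycle_word_eq_imp_cycle_ones_eq:
  "cycle_word n Q e j = cycle_word n Q e' j' \<Longrightarrow> cycle_ones n Q e j = cycle_ones n Q e' j'"
proof (rule strict_mono_range_eq[OF strict_mono_cycle_ones strict_mono_cycle_ones])
  assume "cycle_word n Q e j = cycle_word n Q e' j'"
  then have "{i. cycle_word n Q e j i} = {i. cycle_word n Q e' j' i}"
    by simp
  then show "range (cycle_ones n Q e j) = range (cycle_ones n Q e' j')"
    by (simp add: cycle_word_def)
qed

lemma R_funpow_cycle_word:
  assumes "n > 0" and "\<forall>j<n. one_positions (Q j) \<noteq> [] \<longrightarrow> Q (Suc j mod n) = rho_list (Q j)"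
  shows "(R ^^ m) (bval (cycle_word n Q e 0)) = bval (cycle_word n Q e (m mod n))"
proof (induction m)
  case (Suc m)
  have "m mod n < n"
    using assms(1) by simp
  then have "rho (cycle_word n Q e (m mod n)) = cycle_word n Q e (Suc (m mod n) mod n)"
    using assms(2) by (intro rho_cycle_word) auto
  then show ?case
    using Suc by (simp add: R_bval infinite_cycle_word mod_Suc_eq)
qed simp

section \<open>Periodic points of R\<close>

lemma periodic_point_near:
  assumes "0 \<le> x" "x \<le> 1"
  shows "\<exists>y\<in>{0..1}. periodic_point R y \<and> \<bar>y - x\<bar> \<le> 1 / 2 ^ L"
proof -
  define p where "p = map (greedy_digit x) [0..<L]"
  define Q where "Q j = (rho_list ^^ j) p" for j
  define n where "n = Suc (2 * L)"
  have "Q (2 * L) = []"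
    using rho_list_funpow_Nil[of p] by (simp add: Q_def p_def)
  have "\<forall>j<n. one_positions (Q j) \<noteq> [] \<longrightarrow> Q (Suc j mod n) = rho_list (Q j)"
  proof (intro allI impI)
    fix j assume "j < n" "one_positions (Q j) \<noteq> []"
    then have "Suc j < n"
      using \<open>Q (2 * L) = []\<close> by (auto simp: n_def one_positions_def less_Suc_eq)
    then show "Q (Suc j mod n) = rho_list (Q j)"
      by (simp add: Q_def)
  qed
  then have "(R ^^ n) (bval (cycle_word n Q (\<lambda>_ _. 0) 0)) = bval (cycle_word n Q (\<lambda>_ _. 0) 0)"
    using R_funpow_cycle_word[where m = n] by (simp add: n_def)
  then have "periodic_point R (bval (cycle_word n Q (\<lambda>_ _. 0) 0))"
    unfolding periodic_point_def n_def by blast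
  moreover have "\<forall>i<L. cycle_word n Q (\<lambda>_ _. 0) 0 i = greedy_digit x i"
    by (simp add: cycle_word_prefix Q_def p_def)
  ultimately show ?thesis
    using bval_greedy_approx[OF assms] bval_bounds by auto
qed

lemma closure_periodic_points: "closure {x \<in> {0..1}. periodic_point R x} = {0..1::real}"
proof
  show "closure {x \<in> {0..1}. periodic_point R x} \<subseteq> {0..1}"
    by (rule closure_minimal) auto
  show "{0..1} \<subseteq> closure {x \<in> {0..1::real}. periodic_point R x}"
  proof
    fix x :: real assume "x \<in> {0..1}"
    show "x \<in> closure {x \<in> {0..1}. periodic_point R x}"
      unfolding closure_approachable
    proof (intro allI impI)
      fix \<epsilon> :: real assume "\<epsilon> > 0"
      then obtain L where L: "(1/2::real) ^ L < \<epsilon>"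
        using real_arch_pow_inv by force
      obtain y where "y \<in> {0..1}" "periodic_point R y" "\<bar>y - x\<bar> \<le> 1 / 2 ^ L"
        using periodic_point_near[of x L] \<open>x \<in> {0..1}\<close> by auto
      then show "\<exists>y\<in>{x \<in> {0..1}. periodic_point R x}. dist y x < \<epsilon>"
        using L by (auto simp: dist_real_def power_one_over)
    qed
  qed
qed

text \<open>Offsets for the cycle without prescribed prefixes: the offset j at position 0 makes the
  n words of the cycle pairwise distinct, and the offsets of the first word encode s.\<close>
definition seed_offsets :: "(nat \<Rightarrow> bool) \<Rightarrow> nat \<Rightarrow> nat \<Rightarrow> nat" where
  "seed_offsets s j m = (if m = 0 then j else if j = 0 \<and> s (m - 1) then 1 else 0)"

definition seed_point :: "nat \<Rightarrow> (nat \<Rightarrow> bool) \<Rightarrow> real" where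
  "seed_point n s = bval (cycle_word n (\<lambda>_. []) (seed_offsets s) 0)"

lemma R_funpow_seed_point:
  "n > 0 \<Longrightarrow>
     (R ^^ m) (seed_point n s) = bval (cycle_word n (\<lambda>_. []) (seed_offsets s) (m mod n))"
  unfolding seed_point_def by (rule R_funpow_cycle_word) (auto simp: one_positions_def)

lemma minimal_period_seed_point:
  assumes "n > 0"
  shows "minimal_period R n (seed_point n s)"
proof -
  let ?w = "cycle_word n (\<lambda>_. []) (seed_offsets s)"
  have first_one: "cycle_ones n (\<lambda>_. []) (seed_offsets s) j 0 = 2 + 2 * j" for j
    by (subst cycle_ones_free)
       (simp_all add: cycle_base_def cycle_one_next_def one_positions_def seed_offsets_def)
  have "(R ^^ m) (seed_point n s) \<noteq> seed_point n s" if "0 < m" "m < n" for m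
  proof
    assume "(R ^^ m) (seed_point n s) = seed_point n s"
    then have "bval (?w m) = bval (?w 0)"
      using R_funpow_seed_point[OF assms, of m] that by (simp add: seed_point_def)
    then have "?w m = ?w 0"
      by (rule inj_onD[OF inj_on_bval]) (simp_all add: infinite_cycle_word)
    then have "cycle_ones n (\<lambda>_. []) (seed_offsets s) m = cycle_ones n (\<lambda>_. []) (seed_offsets s) 0"
      by (rule cycle_word_eq_imp_cycle_ones_eq)
    then show False
      using first_one[of m] first_one[of 0] \<open>0 < m\<close> by simp
  qed
  then show ?thesis
    using R_funpow_seed_point[OF assms, of n] assms by (simp add: minimal_period_def seed_point_def)
qed

lemma inj_seed_point: "inj (seed_point n)"
proof (rule injI, rule ccontr)
  fix s s' assume eq: "seed_point n s = seed_point n s'" and "s \<noteq> s'"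
  then have ex: "\<exists>i. s i \<noteq> s' i" by auto
  define M where "M = (LEAST i. s i \<noteq> s' i)"
  have "s M \<noteq> s' M"
    unfolding M_def by (rule LeastI_ex[OF ex])
  moreover have "\<forall>i<M. s i = s' i"
    unfolding M_def using not_less_Least by blast
  then have "\<forall>j. \<forall>i<Suc M. seed_offsets s j i = seed_offsets s' j i"
    by (auto simp: seed_offsets_def)
  then have "cycle_ones n (\<lambda>_. []) (seed_offsets s) 0 (Suc M) + 2 * seed_offsets s' 0 (Suc M) =
      cycle_ones n (\<lambda>_. []) (seed_offsets s') 0 (Suc M) + 2 * seed_offsets s 0 (Suc M)"
    by (intro cycle_ones_free_shift cycle_ones_agree) (simp_all add: one_positions_def)
  moreover have "cycle_word n (\<lambda>_. []) (seed_offsets s) 0 = cycle_word n (\<lambda>_. []) (seed_offsets s') 0"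
    using eq unfolding seed_point_def
    by (rule inj_onD[OF inj_on_bval]) (simp_all add: infinite_cycle_word)
  then have "cycle_ones n (\<lambda>_. []) (seed_offsets s) 0 = cycle_ones n (\<lambda>_. []) (seed_offsets s') 0"
    by (rule cycle_word_eq_imp_cycle_ones_eq)
  ultimately show False
    by (simp add: seed_offsets_def split: if_splits)
qed

lemma uncountable_UNIV_nat_bool: "uncountable (UNIV :: (nat \<Rightarrow> bool) set)"
proof
  assume "countable (UNIV :: (nat \<Rightarrow> bool) set)"
  then obtain k where "from_nat_into UNIV k = (\<lambda>i. \<not> from_nat_into UNIV i i :: bool)"
    using from_nat_into_surj[OF _ UNIV_I] by metis
  then show False by (auto dest: fun_cong[where x = k])
qed

lemma uncountable_minimal_period:
  assumes "n \<ge> 1"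
  shows "uncountable {x \<in> {0..1}. minimal_period R n x}"
proof
  assume "countable {x \<in> {0..1}. minimal_period R n x}"
  moreover have "range (seed_point n) \<subseteq> {x \<in> {0..1}. minimal_period R n x}"
    using minimal_period_seed_point assms bval_bounds by (auto simp: seed_point_def)
  ultimately have "countable (range (seed_point n))"
    using countable_subset by blast
  then show False
    using countable_image_inj_on inj_seed_point uncountable_UNIV_nat_bool by blast
qed

theorem proposition6p4:
  shows "closure {x \<in> {0..1}. periodic_point R x} = {0..1}
     \<and> (\<forall>n::nat. n \<ge> 1 \<longrightarrow> uncountable {x \<in> {0..1}. minimal_period R n x})"
  using closure_periodic_points uncountable_minimal_period by blast

end
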